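(* A packed word $w$ is $212$-avoiding if and only if there is a generalized Stirling permutation $u$ with $\mathbf w(u)=w$.
   Context: A word $w=w_1\cdots w_n$ of positive integers is a packed word if its set of letters is $\{1,\dots,m\}$ for some $m\ge0$. It is $212$-avoiding if whenever $i<j<k$ and $w_i=w_k$ we have $w_j\ge w_i$. A planar tree is a rooted tree in which the children of each node are linearly ordered and every node is a leaf or has at least two children (an internal node). A generalized Stirling permutation of degree $n$ is a planar tree with $n+1$ leaves together with a bijection $\kappa$ from its set of internal nodes to $\{1,\dots,N\}$ ($N$ = number of internal nodes) such that the label of each internal node is smaller than the labels of its internal children. Its word $\mathbf w(u)$ is defined recursively: a leaf has empty word; a node $x$ with children $c_1,\dots,c_k$ (left to right) has word $\mathbf w(c_1)\,\kappa(x)\,\mathbf w(c_2)\,\kappa(x)\cdots\kappa(x)\,\mathbf w(c_k)$ (i.e. the label of $x$ is written in each of the $k-1$ gaps between its children), and $\mathbf w(u)$ is the word of the root. *)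

theory Defs
  imports Main
begin

datatype ptree = Leaf | Node nat "ptree list"

fun planar :: "ptree \<Rightarrow> bool" where
  "planar Leaf = True"
| "planar (Node k cs) = (2 \<le> length cs \<and> (\<forall>c\<in>set cs. planar c))"

fun labels :: "ptree \<Rightarrow> nat list" where
  "labels Leaf = []"
| "labels (Node k cs) = k # concat (map labels cs)"

fun increasing :: "ptree \<Rightarrow> bool" where
  "increasing Leaf = True"
| "increasing (Node k cs) =
     (\<forall>c\<in>set cs. (case c of Leaf \<Rightarrow> True | Node k' _ \<Rightarrow> k < k') \<and> increasing c)"

fun join_with :: "nat \<Rightarrow> nat list list \<Rightarrow> nat list" where
  "join_with k [] = []"
| "join_with k [x] = x"
| "join_with k (x # y # xs) = x @ [k] @ join_with k (y # xs)"

fun tword :: "ptree \<Rightarrow> nat list" where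
  "tword Leaf = []"
| "tword (Node k cs) = join_with k (map tword cs)"

definition gen_stirling :: "ptree \<Rightarrow> bool" where
  "gen_stirling t \<longleftrightarrow> planar t \<and> increasing t \<and> distinct (labels t)
     \<and> set (labels t) = {1..length (labels t)}"

definition packed :: "nat list \<Rightarrow> bool" where
  "packed w \<longleftrightarrow> (\<exists>m. set w = {1..m})"

definition avoids212 :: "nat list \<Rightarrow> bool" where
  "avoids212 w \<longleftrightarrow> (\<forall>i j k. i < j \<and> j < k \<and> k < length w \<and> w ! i = w ! k \<longrightarrow> w ! i \<le> w ! j)"

end

theory Submission
  imports Defs
begin

(* The word of an increasing tree avoids 212: at a node labelled k the words of the subtrees
   use pairwise disjoint sets of letters, all larger than k, so the two equal letters of a
   would-be pattern lie in the word of one subtree.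
   Conversely, cut a 212-avoiding word at the occurrences of its minimal letter m. The factors
   are again 212-avoiding, and they are pairwise disjoint, since a letter occurring in two of
   them has an m between its occurrences and so would be at most m. Recursing on the factors
   gives an increasing planar tree with this word whose labels are distinct, and packedness
   makes the labels exactly 1..N. *)

lemma avoids212_reindex:
  assumes w: "avoids212 w" and f: "strict_mono f"
    and v: "\<forall>i<length v. f i < length w \<and> v ! i = w ! f i"
  shows "avoids212 v"
  unfolding avoids212_def
proof (intro allI impI)
  fix i j k
  assume "i < j \<and> j < k \<and> k < length v \<and> v ! i = v ! k"
  moreover from this have "f i < f j" "f j < f k" using f by (auto dest: strict_monoD)
  ultimately show "v ! i \<le> v ! j"
    using v w[unfolded avoids212_def, rule_format, of "f i" "f j" "f k"] by auto
qed

lemma avoids212_appendD1: "avoids212 (xs @ ys) \<Longrightarrow> avoids212 xs"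
  by (rule avoids212_reindex[where f = id]) (auto simp: strict_mono_def nth_append)

lemma avoids212_appendD2: "avoids212 (xs @ ys) \<Longrightarrow> avoids212 ys"
  by (rule avoids212_reindex[where f = "(+) (length xs)"])
    (auto simp: strict_mono_def nth_append)

lemma avoids212_separator_le:
  assumes "avoids212 (xs @ m # ys)" "x \<in> set xs" "x \<in> set ys"
  shows "x \<le> m"
proof -
  obtain i where "i < length xs" "xs ! i = x" using assms(2) by (auto simp: in_set_conv_nth)
  moreover obtain k where "k < length ys" "ys ! k = x" using assms(3) by (auto simp: in_set_conv_nth)
  ultimately show ?thesis
    using assms(1)[unfolded avoids212_def, rule_format, of i "length xs" "length xs + Suc k"]
    by (simp add: nth_append)
qed

lemma avoids212_append:
  assumes xs: "avoids212 xs" and ys: "avoids212 ys" and disj: "set xs \<inter> set ys = {}"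
  shows "avoids212 (xs @ ys)"
  unfolding avoids212_def
proof (intro allI impI)
  fix i j k
  assume ijk: "i < j \<and> j < k \<and> k < length (xs @ ys) \<and> (xs @ ys) ! i = (xs @ ys) ! k"
  consider "k < length xs" | "length xs \<le> i" | "i < length xs" "length xs \<le> k" by linarith
  then show "(xs @ ys) ! i \<le> (xs @ ys) ! j"
  proof cases
    case 1
    then show ?thesis
      using ijk xs[unfolded avoids212_def, rule_format, of i j k] by (auto simp: nth_append)
  next
    case 2
    then have "i - length xs < j - length xs" "j - length xs < k - length xs"
      "k - length xs < length ys" using ijk by auto
    then show ?thesis
      using 2 ijk
        ys[unfolded avoids212_def, rule_format, of "i - length xs" "j - length xs" "k - length xs"]
      by (auto simp: nth_append)
  next
    case 3
    then have "xs ! i \<in> set xs \<inter> set ys"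
      using ijk nth_mem[of i xs] nth_mem[of "k - length xs" ys] by (auto simp: nth_append)
    then show ?thesis using disj by simp
  qed
qed

lemma avoids212_Cons_min:
  assumes min: "\<forall>y\<in>set ys. x \<le> y" and ys: "avoids212 ys"
  shows "avoids212 (x # ys)"
  unfolding avoids212_def
proof (intro allI impI)
  fix i j k
  assume ijk: "i < j \<and> j < k \<and> k < length (x # ys) \<and> (x # ys) ! i = (x # ys) ! k"
  show "(x # ys) ! i \<le> (x # ys) ! j"
  proof (cases i)
    case 0
    then show ?thesis using ijk min by (auto simp: nth_Cons')
  next
    case (Suc i')
    moreover obtain j' k' where "j = Suc j'" "k = Suc k'" using ijk by (cases j; cases k) auto
    ultimately show ?thesis using ijk ys[unfolded avoids212_def, rule_format, of i' j' k'] by simp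
  qed
qed

lemma distinct_concat_iff_sorted_wrt:
  "distinct (concat xss) \<longleftrightarrow>
     (\<forall>xs\<in>set xss. distinct xs) \<and> sorted_wrt (\<lambda>xs ys. set xs \<inter> set ys = {}) xss"
  by (induction xss) auto

lemma join_with_Cons: "join_with k (x # xs) = (if xs = [] then x else x @ k # join_with k xs)"
  by (cases xs) auto

lemma set_join_with_subset: "set (join_with k ws) \<subseteq> insert k (set (concat ws))"
  by (induction ws) (auto simp: join_with_Cons)

lemma set_concat_subset_join_with: "set (concat ws) \<subseteq> set (join_with k ws)"
  by (induction ws) (auto simp: join_with_Cons)

lemma set_join_with:
  assumes "2 \<le> length ws"
  shows "set (join_with k ws) = insert k (set (concat ws))"
proof -
  obtain x y ws' where "ws = x # y # ws'"
    using assms by (auto simp: numeral_2_eq_2 Suc_le_length_iff)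
  then show ?thesis
    using set_join_with_subset[of k "y # ws'"] set_concat_subset_join_with[of "y # ws'" k] by auto
qed

lemma length_join_with:
  "ws \<noteq> [] \<Longrightarrow> length (join_with k ws) + 1 = sum_list (map length ws) + length ws"
  by (induction k ws rule: join_with.induct) simp_all

lemma avoids212_join_with:
  assumes "\<forall>w\<in>set ws. avoids212 w" and "sorted_wrt (\<lambda>u v. set u \<inter> set v = {}) ws"
    and "\<forall>w\<in>set ws. \<forall>x\<in>set w. k < x"
  shows "avoids212 (join_with k ws)"
  using assms
proof (induction k ws rule: join_with.induct)
  case (1 k)
  then show ?case by (simp add: avoids212_def)
next
  case (2 k x)
  then show ?case by simp
next
  case (3 k x y ws)
  let ?rest = "join_with k (y # ws)"
  have "avoids212 (k # ?rest)"
    using 3 set_join_with_subset[of k "y # ws"] by (intro avoids212_Cons_min) fastforce+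
  moreover have "set x \<inter> set (k # ?rest) = {}"
    using "3.prems" set_join_with_subset[of k "y # ws"] by fastforce
  ultimately show ?case using "3.prems" by (simp add: avoids212_append)
qed

lemma avoids212_join_withD: "avoids212 (join_with k ws) \<Longrightarrow> w \<in> set ws \<Longrightarrow> avoids212 w"
proof (induction k ws rule: join_with.induct)
  case (3 k x y ws)
  then have av: "avoids212 (x @ [k] @ join_with k (y # ws))" by simp
  show ?case
  proof (cases "w = x")
    case True
    then show ?thesis using avoids212_appendD1[OF av] by simp
  next
    case False
    then show ?thesis using "3.IH" "3.prems"(2) avoids212_appendD2[of "x @ [k]"] av by simp
  qed
qed simp_all

lemma sorted_wrt_disjoint_join_with:
  assumes "avoids212 (join_with k ws)" and "\<forall>w\<in>set ws. \<forall>x\<in>set w. k < x"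
  shows "sorted_wrt (\<lambda>u v. set u \<inter> set v = {}) ws"
  using assms
proof (induction k ws rule: join_with.induct)
  case (3 k x y ws)
  let ?rest = "join_with k (y # ws)"
  have av: "avoids212 (x @ k # ?rest)" using "3.prems"(1) by simp
  have "set x \<inter> set v = {}" if "v \<in> set (y # ws)" for v
  proof -
    have "set v \<subseteq> set ?rest" using that set_concat_subset_join_with[of "y # ws" k] by auto
    then show ?thesis using avoids212_separator_le[OF av] "3.prems"(2) by fastforce
  qed
  moreover have "avoids212 ?rest" using avoids212_appendD2[of "x @ [k]"] av by simp
  ultimately show ?case using "3.IH" "3.prems"(2) by simp
qed simp_all

fun split_on :: "nat \<Rightarrow> nat list \<Rightarrow> nat list list" where
  "split_on m [] = [[]]"
| "split_on m (x # xs) =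
     (if x = m then [] # split_on m xs
      else (case split_on m xs of [] \<Rightarrow> [[x]] | ys # yss \<Rightarrow> (x # ys) # yss))"

lemma split_on_not_Nil: "split_on m xs \<noteq> []"
  by (induction xs) (auto split: list.split)

lemma split_on_Cons_neq:
  assumes "x \<noteq> m"
  obtains ys yss where "split_on m xs = ys # yss" "split_on m (x # xs) = (x # ys) # yss"
  using assms split_on_not_Nil[of m xs] by (cases "split_on m xs") auto

lemma join_with_split_on: "join_with m (split_on m xs) = xs"
proof (induction xs)
  case (Cons x xs)
  show ?case
  proof (cases "x = m")
    case True
    then show ?thesis using Cons split_on_not_Nil[of m xs] by (simp add: join_with_Cons)
  next
    case False
    then obtain ys yss where "split_on m xs = ys # yss" "split_on m (x # xs) = (x # ys) # yss"
      by (rule split_on_Cons_neq)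
    then show ?thesis using Cons by (simp add: join_with_Cons split: if_splits)
  qed
qed simp

lemma set_split_on: "p \<in> set (split_on m xs) \<Longrightarrow> set p \<subseteq> set xs - {m}"
proof (induction xs arbitrary: p)
  case (Cons x xs)
  show ?case
  proof (cases "x = m")
    case True
    then show ?thesis using Cons by fastforce
  next
    case False
    then obtain ys yss where "split_on m xs = ys # yss" "split_on m (x # xs) = (x # ys) # yss"
      by (rule split_on_Cons_neq)
    then show ?thesis using Cons False by fastforce
  qed
qed simp


lemma length_split_on_ge_2: "m \<in> set xs \<Longrightarrow> 2 \<le> length (split_on m xs)"
proof (induction xs)
  case (Cons x xs)
  show ?case
  proof (cases "x = m")
    case True
    then show ?thesis using split_on_not_Nil[of m xs] by (cases "split_on m xs") auto
  next
    case False
    then obtain ys yss where "split_on m xs = ys # yss" "split_on m (x # xs) = (x # ys) # yss"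
      by (rule split_on_Cons_neq)
    then show ?thesis using Cons False by auto
  qed
qed simp

lemma length_split_on_less:
  assumes "m \<in> set xs" "p \<in> set (split_on m xs)"
  shows "length p < length xs"
proof -
  have "length p \<le> sum_list (map length (split_on m xs))"
    using assms(2) by (simp add: member_le_sum_list)
  then show ?thesis
    using length_join_with[OF split_on_not_Nil, of m m xs] length_split_on_ge_2[OF assms(1)]
    by (simp add: join_with_split_on)
qed

lemma split_on_Min_less:
  assumes "p \<in> set (split_on (Min (set w)) w)" "x \<in> set p"
  shows "Min (set w) < x"
proof -
  have "x \<in> set w - {Min (set w)}" using set_split_on assms by blast
  then show ?thesis by (simp add: order.not_eq_order_implies_strict)
qed

function tree_of_word :: "nat list \<Rightarrow> ptree" where
  "tree_of_word w =
     (if w = [] then Leaf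
      else Node (Min (set w)) (map tree_of_word (split_on (Min (set w)) w)))"
  by pat_completeness auto
termination
  by (relation "measure length") (auto intro!: length_split_on_less)

declare tree_of_word.simps [simp del]

lemma tree_of_word_Nil [simp]: "tree_of_word [] = Leaf"
  by (simp add: tree_of_word.simps)

lemma tree_of_word_not_Nil:
  "w \<noteq> [] \<Longrightarrow>
     tree_of_word w = Node (Min (set w)) (map tree_of_word (split_on (Min (set w)) w))"
  by (simp add: tree_of_word.simps)

lemma tword_tree_of_word: "tword (tree_of_word w) = w"
proof (induction w rule: tree_of_word.induct)
  case (1 w)
  show ?case
  proof (cases "w = []")
    case False
    then have "tword (tree_of_word w) = join_with (Min (set w)) (split_on (Min (set w)) w)"
      using "1.IH" by (simp add: tree_of_word_not_Nil map_idI)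
    then show ?thesis by (simp add: join_with_split_on)
  qed simp
qed

lemma planar_tree_of_word: "planar (tree_of_word w)"
proof (induction w rule: tree_of_word.induct)
  case (1 w)
  then show ?case
    by (cases "w = []") (simp_all add: tree_of_word_not_Nil length_split_on_ge_2)
qed

lemma set_labels_tree_of_word: "set (labels (tree_of_word w)) = set w"
proof (induction w rule: tree_of_word.induct)
  case (1 w)
  show ?case
  proof (cases "w = []")
    case False
    let ?m = "Min (set w)" and ?ps = "split_on (Min (set w)) w"
    have "set (labels (tree_of_word w)) = insert ?m (set (concat ?ps))"
      using "1.IH" False by (auto simp: tree_of_word_not_Nil)
    also have "\<dots> = set (join_with ?m ?ps)"
      using False by (simp add: set_join_with length_split_on_ge_2)
    finally show ?thesis by (simp add: join_with_split_on)
  qed simp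
qed

lemma increasing_tree_of_word: "increasing (tree_of_word w)"
proof (induction w rule: tree_of_word.induct)
  case (1 w)
  show ?case
  proof (cases "w = []")
    case False
    have "case tree_of_word p of Leaf \<Rightarrow> True | Node k _ \<Rightarrow> Min (set w) < k"
      if "p \<in> set (split_on (Min (set w)) w)" for p
    proof (cases "p = []")
      case False
      then show ?thesis using split_on_Min_less[OF that] by (simp add: tree_of_word_not_Nil)
    qed simp
    then show ?thesis using "1.IH" False by (simp add: tree_of_word_not_Nil)
  qed simp
qed

lemma distinct_labels_tree_of_word: "avoids212 w \<Longrightarrow> distinct (labels (tree_of_word w))"
proof (induction w rule: tree_of_word.induct)
  case (1 w)
  show ?case
  proof (cases "w = []")
    case False
    let ?m = "Min (set w)" and ?ps = "split_on (Min (set w)) w"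
    have join: "join_with ?m ?ps = w" by (rule join_with_split_on)
    have gt: "\<forall>p\<in>set ?ps. \<forall>x\<in>set p. ?m < x" using split_on_Min_less by blast
    have "\<forall>p\<in>set ?ps. distinct (labels (tree_of_word p))"
      using "1.IH" "1.prems" False avoids212_join_withD[of ?m ?ps] join by auto
    moreover have "sorted_wrt (\<lambda>u v. set u \<inter> set v = {}) (map (labels \<circ> tree_of_word) ?ps)"
      using sorted_wrt_disjoint_join_with[of ?m ?ps] "1.prems" join gt
      by (simp add: sorted_wrt_map set_labels_tree_of_word)
    moreover have "?m \<notin> set (concat (map (labels \<circ> tree_of_word) ?ps))"
      using gt by (auto simp: set_labels_tree_of_word)
    ultimately show ?thesis
      using False by (simp add: tree_of_word_not_Nil distinct_concat_iff_sorted_wrt)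
  qed simp
qed

lemma set_tword_subset: "set (tword t) \<subseteq> set (labels t)"
proof (induction t)
  case (Node k cs)
  then show ?case using set_join_with_subset[of k "map tword cs"] by fastforce
qed simp

lemma increasing_child_labels_gt:
  "increasing (Node k cs) \<Longrightarrow> c \<in> set cs \<Longrightarrow> x \<in> set (labels c) \<Longrightarrow> k < x"
proof (induction c arbitrary: k cs x)
  case (Node k' ds)
  then have "k < k'" "increasing (Node k' ds)" by auto
  then show ?case using Node by fastforce
qed simp

lemma avoids212_tword: "increasing t \<Longrightarrow> distinct (labels t) \<Longrightarrow> avoids212 (tword t)"
proof (induction t)
  case Leaf
  then show ?case by (simp add: avoids212_def)
next
  case (Node k cs)
  have distinct: "\<forall>c\<in>set cs. distinct (labels c)"
    and disjoint: "sorted_wrt (\<lambda>u v. set u \<inter> set v = {}) (map labels cs)"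
    using Node.prems(2) by (simp_all add: distinct_concat_iff_sorted_wrt)
  have "\<forall>c\<in>set cs. avoids212 (tword c)" using Node distinct by simp
  moreover have "sorted_wrt (\<lambda>u v. set u \<inter> set v = {}) (map tword cs)"
    using disjoint unfolding sorted_wrt_map
    by (rule sorted_wrt_mono_rel[rotated]) (use set_tword_subset in blast)
  moreover have "\<forall>w\<in>set (map tword cs). \<forall>x\<in>set w. k < x"
    using increasing_child_labels_gt[OF Node.prems(1)] set_tword_subset by fastforce
  ultimately show ?case by (simp add: avoids212_join_with)
qed

theorem mainTheorem4:
  fixes w :: "nat list"
  assumes "packed w"
  shows "avoids212 w \<longleftrightarrow> (\<exists>u. gen_stirling u \<and> tword u = w)"
proof
  assume "avoids212 w"
  obtain m where m: "set w = {1..m}" using assms unfolding packed_def by blast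
  let ?u = "tree_of_word w"
  have "distinct (labels ?u)" using \<open>avoids212 w\<close> by (rule distinct_labels_tree_of_word)
  moreover have "set (labels ?u) = {1..length (labels ?u)}"
    using distinct_card[OF \<open>distinct (labels ?u)\<close>] m by (simp add: set_labels_tree_of_word)
  ultimately have "gen_stirling ?u"
    by (simp add: gen_stirling_def planar_tree_of_word increasing_tree_of_word)
  then show "\<exists>u. gen_stirling u \<and> tword u = w" using tword_tree_of_word by blast
next
  assume "\<exists>u. gen_stirling u \<and> tword u = w"
  then show "avoids212 w" by (auto simp: gen_stirling_def avoids212_tword)
qed

end
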